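(* Let $k,\ell,n$ be positive integers with $k+\ell=n$ and let $M,B,N>0$. Let $A$ be the symmetric $n\times n$ matrix whose first $k$ rows all equal $(M,\dots,M,B,\dots,B)$ ($k$ entries $M$ followed by $\ell$ entries $B$) and whose last $\ell$ rows all equal $(B,\dots,B,N,\dots,N)$ ($k$ entries $B$ followed by $\ell$ entries $N$). Put $t=MN/B^2$. Then the Sinkhorn limit $S(A)$ is the block matrix whose entries in the upper-left $k\times k$ block all equal $a$, whose entries in the two off-diagonal blocks ($k\times\ell$ and $\ell\times k$) all equal $b$, and whose entries in the lower-right $\ell\times\ell$ block all equal $c$, where: if $t=1$, then $a=b=c=1/n$; and if $t\neq 1$, then \[ a=\frac1k+\frac{n-\sqrt{4k\ell t+(k-\ell)^2}}{2k^2(t-1)},\qquad b=\frac{1-ka}{\ell},\qquad c=\frac{1-kb}{\ell}=\frac{\ell-k+k^2a}{\ell^2}. \] In particular $S(A)$ depends only on the ratio $MN/B^2$.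
   Context: A matrix is doubly stochastic if it is nonnegative with all row and column sums equal to $1$. For a positive $n\times n$ matrix $A$ there exist positive diagonal matrices $X,Y$ with $XAY$ doubly stochastic, and this matrix $XAY$ is unique; it is called the Sinkhorn limit $S(A)$. For symmetric positive $A$ one may take $Y=X$. *)

theory Defs
  imports "HOL-Analysis.Analysis"
begin

text \<open>n x n real matrices are represented as functions nat => nat => real,
  with only the indices i, j < n being relevant (0-based indexing).\<close>

definition doubly_stochastic :: "nat \<Rightarrow> (nat \<Rightarrow> nat \<Rightarrow> real) \<Rightarrow> bool" where
  "doubly_stochastic n S \<longleftrightarrow>
     (\<forall>i<n. \<forall>j<n. S i j \<ge> 0) \<and>
     (\<forall>i<n. (\<Sum>j<n. S i j) = 1) \<and>
     (\<forall>j<n. (\<Sum>i<n. S i j) = 1)"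

definition diag_scaling :: "nat \<Rightarrow> (nat \<Rightarrow> nat \<Rightarrow> real) \<Rightarrow> (nat \<Rightarrow> nat \<Rightarrow> real) \<Rightarrow> bool" where
  "diag_scaling n A S \<longleftrightarrow>
     (\<exists>x y :: nat \<Rightarrow> real. (\<forall>i<n. x i > 0) \<and> (\<forall>j<n. y j > 0) \<and>
        (\<forall>i<n. \<forall>j<n. S i j = x i * A i j * y j)) \<and>
     (\<forall>i j. \<not> (i < n \<and> j < n) \<longrightarrow> S i j = 0)"

definition sinkhorn_limit :: "nat \<Rightarrow> (nat \<Rightarrow> nat \<Rightarrow> real) \<Rightarrow> (nat \<Rightarrow> nat \<Rightarrow> real)" where
  "sinkhorn_limit n A = (THE S. diag_scaling n A S \<and> doubly_stochastic n S)"

end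

theory Submission
  imports Defs
begin

text \<open>Scaling the block matrix A symmetrically by a vector that is constant on the two index blocks
  yields a block matrix with entries a, b, c satisfying a c / b^2 = M N / B^2 = t; it is
  doubly stochastic iff k a + l b = 1 = k b + l c. With P = 2 / b these conditions become
  (P - 2k)(P - 2l) = 4 k l t, whose root exceeding 2k and 2l is P = k + l + sqrt (4 k l t + (k - l)^2);
  this gives the stated formulas. The doubly stochastic scaling of a positive matrix is unique:
  if D S E and S are both doubly stochastic, comparing the row of the largest entry of D with the
  column of the smallest entry of E forces D E = I.\<close>

lemma doubly_stochastic_cong:
  assumes "\<And>i j. i < n \<Longrightarrow> j < n \<Longrightarrow> S i j = S' i j"
  shows "doubly_stochastic n S \<longleftrightarrow> doubly_stochastic n S'"
proof -
  have "(\<Sum>j<n. S i j) = (\<Sum>j<n. S' i j)" if "i < n" for i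
    using assms that by (intro sum.cong) auto
  moreover have "(\<Sum>i<n. S i j) = (\<Sum>i<n. S' i j)" if "j < n" for j
    using assms that by (intro sum.cong) auto
  ultimately show ?thesis using assms unfolding doubly_stochastic_def by auto
qed

lemma doubly_stochastic_rescaling_trivial:
  fixes S :: "nat \<Rightarrow> nat \<Rightarrow> real" and d e :: "nat \<Rightarrow> real"
  assumes S: "doubly_stochastic n S" and S_pos: "\<And>i j. i < n \<Longrightarrow> j < n \<Longrightarrow> S i j > 0"
    and d_pos: "\<And>i. i < n \<Longrightarrow> d i > 0" and e_pos: "\<And>j. j < n \<Longrightarrow> e j > 0"
    and dSe: "doubly_stochastic n (\<lambda>i j. d i * S i j * e j)"
    and "i < n" "j < n"
  shows "d i * e j = 1"
proof -
  have row_const: "(\<Sum>j<n. x * S i j * y) = x * y" if "i < n" for i x y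
    using S that unfolding doubly_stochastic_def
    by (simp add: sum_distrib_left[symmetric] sum_distrib_right[symmetric] mult.commute)
  have col_const: "(\<Sum>i<n. x * S i j * y) = x * y" if "j < n" for j x y
    using S that unfolding doubly_stochastic_def
    by (simp add: sum_distrib_left[symmetric] sum_distrib_right[symmetric] mult.commute)
  have row: "(\<Sum>j<n. d i * S i j * e j) = 1" if "i < n" for i
    using dSe that unfolding doubly_stochastic_def by blast
  have col: "(\<Sum>i<n. d i * S i j * e j) = 1" if "j < n" for j
    using dSe that unfolding doubly_stochastic_def by blast
  have ne: "{..<n} \<noteq> {}" using \<open>i < n\<close> by auto
  have "Max (d ` {..<n}) \<in> d ` {..<n}" using ne by (intro Max_in) auto
  then obtain i0 where i0: "i0 < n" and i0_max: "d i0 = Max (d ` {..<n})" by auto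
  have d_max: "d i \<le> d i0" if "i < n" for i unfolding i0_max using that by (intro Max_ge) auto
  have "Min (e ` {..<n}) \<in> e ` {..<n}" using ne by (intro Min_in) auto
  then obtain j0 where j0: "j0 < n" and j0_min: "e j0 = Min (e ` {..<n})" by auto
  have e_min: "e j0 \<le> e j" if "j < n" for j unfolding j0_min using that by (intro Min_le) auto
  have "d i0 * e j0 \<le> 1"
  proof -
    have "d i0 * e j0 = (\<Sum>j<n. d i0 * S i0 j * e j0)" using row_const[OF i0] by simp
    also have "\<dots> \<le> (\<Sum>j<n. d i0 * S i0 j * e j)"
      using d_pos[OF i0] S_pos[OF i0] e_min by (intro sum_mono) (simp add: less_imp_le)
    finally show ?thesis using row[OF i0] by simp
  qed
  moreover have "1 \<le> d i0 * e j0"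
  proof -
    have "1 = (\<Sum>i<n. d i * S i j0 * e j0)" using col[OF j0] by simp
    also have "\<dots> \<le> (\<Sum>i<n. d i0 * S i j0 * e j0)"
      using e_pos[OF j0] S_pos[OF _ j0] d_max by (intro sum_mono) (simp add: less_imp_le)
    finally show ?thesis using col_const[OF j0] by simp
  qed
  ultimately have d_e_extremal: "d i0 * e j0 = 1" by simp
  \<comment> \<open>equality in the row i0 estimate forces e to be constant, as S is positive\<close>
  have e_const: "e j' = e j0" if "j' < n" for j'
  proof (rule ccontr)
    assume "e j' \<noteq> e j0"
    with e_min that have "e j0 < e j'" by (simp add: order_less_le)
    then have "(\<Sum>j<n. d i0 * S i0 j * e j0) < (\<Sum>j<n. d i0 * S i0 j * e j)"
      using d_pos[OF i0] S_pos[OF i0] e_min that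
      by (intro sum_strict_mono_ex1) (auto intro!: mult_left_mono)
    then show False using row[OF i0] row_const[OF i0] d_e_extremal by simp
  qed
  have "d i * e j0 = 1"
    using row[OF \<open>i < n\<close>] row_const[OF \<open>i < n\<close>] e_const by simp
  then show ?thesis using e_const[OF \<open>j < n\<close>] by simp
qed

lemma diag_scaling_doubly_stochastic_unique:
  assumes A_pos: "\<And>i j. i < n \<Longrightarrow> j < n \<Longrightarrow> A i j > 0"
    and S: "diag_scaling n A S" "doubly_stochastic n S"
    and S': "diag_scaling n A S'" "doubly_stochastic n S'"
  shows "S' = S"
proof (intro ext)
  fix i j
  obtain x y where x: "\<forall>i<n. x i > 0" and y: "\<forall>j<n. y j > 0"
    and S_eq: "\<forall>i<n. \<forall>j<n. S i j = x i * A i j * y j"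
    using S(1) unfolding diag_scaling_def by blast
  obtain x' y' where x': "\<forall>i<n. x' i > 0" and y': "\<forall>j<n. y' j > 0"
    and S'_eq: "\<forall>i<n. \<forall>j<n. S' i j = x' i * A i j * y' j"
    using S'(1) unfolding diag_scaling_def by blast
  define d where "d i = x' i / x i" for i
  define e where "e j = y' j / y j" for j
  have S'_rescaled: "S' i j = d i * S i j * e j" if "i < n" "j < n" for i j
  proof -
    have "x i \<noteq> 0" "y j \<noteq> 0" using x y that by auto
    then show ?thesis
      unfolding d_def e_def S_eq[rule_format, OF that] S'_eq[rule_format, OF that] by simp
  qed
  have "doubly_stochastic n (\<lambda>i j. d i * S i j * e j)"
    using doubly_stochastic_cong[of n S' "\<lambda>i j. d i * S i j * e j"] S'_rescaled S'(2) by simp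
  moreover have "S i j > 0" if "i < n" "j < n" for i j
    using S_eq A_pos x y that by simp
  moreover have "d i > 0" if "i < n" for i using x x' that unfolding d_def by simp
  moreover have "e j > 0" if "j < n" for j using y y' that unfolding e_def by simp
  ultimately have "d i * e j = 1" if "i < n" "j < n" for i j
    using doubly_stochastic_rescaling_trivial[OF S(2) _ _ _ _ that] by blast
  then show "S' i j = S i j"
    using S'_rescaled S(1) S'(1) unfolding diag_scaling_def by (cases "i < n \<and> j < n") auto
qed

lemma sinkhorn_limit_eqI:
  assumes "\<And>i j. i < n \<Longrightarrow> j < n \<Longrightarrow> A i j > 0"
    and "diag_scaling n A S" "doubly_stochastic n S"
  shows "sinkhorn_limit n A = S"
  unfolding sinkhorn_limit_def
  using assms diag_scaling_doubly_stochastic_unique by (intro the_equality) blast+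

definition block_matrix :: "nat \<Rightarrow> real \<Rightarrow> real \<Rightarrow> real \<Rightarrow> nat \<Rightarrow> nat \<Rightarrow> real" where
  "block_matrix k p q s i j = (if i < k then (if j < k then p else q) else (if j < k then q else s))"

definition restrict_matrix :: "nat \<Rightarrow> (nat \<Rightarrow> nat \<Rightarrow> real) \<Rightarrow> nat \<Rightarrow> nat \<Rightarrow> real" where
  "restrict_matrix n S i j = (if i < n \<and> j < n then S i j else 0)"

lemma sum_lessThan_add_if:
  "(\<Sum>j<k + l. if j < k then u else v) = real k * u + real l * (v :: real)"
  by (induction l) (simp_all add: algebra_simps)

lemma doubly_stochastic_block_matrix:
  assumes "p \<ge> 0" "q \<ge> 0" "s \<ge> 0"
    and "real k * p + real l * q = 1" "real k * q + real l * s = 1"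
  shows "doubly_stochastic (k + l) (restrict_matrix (k + l) (block_matrix k p q s))"
proof -
  have "(\<Sum>j<k + l. block_matrix k p q s i j) = 1" for i
    using assms(4,5) by (cases "i < k") (simp_all add: block_matrix_def sum_lessThan_add_if)
  moreover have "(\<Sum>i<k + l. block_matrix k p q s i j) = 1" for j
    using assms(4,5) by (cases "j < k") (simp_all add: block_matrix_def sum_lessThan_add_if)
  moreover have "block_matrix k p q s i j \<ge> 0" for i j
    using assms(1-3) by (simp add: block_matrix_def)
  ultimately have "doubly_stochastic (k + l) (block_matrix k p q s)"
    unfolding doubly_stochastic_def by blast
  then show ?thesis
    using doubly_stochastic_cong[of "k + l" "restrict_matrix (k + l) (block_matrix k p q s)"]
    by (simp add: restrict_matrix_def)
qed

lemma diag_scaling_block_matrix: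
  assumes "M > 0" "B > 0" "N > 0" "p > 0" "q > 0" "s > 0"
    and cross_ratio: "p * s = M * N / B\<^sup>2 * q\<^sup>2"
  shows "diag_scaling n (block_matrix k M B N) (restrict_matrix n (block_matrix k p q s))"
proof -
  define x where "x i = (if i < k then sqrt (p / M) else sqrt (s / N))" for i
  have "p / M * (s / N) = (q / B)\<^sup>2"
    using cross_ratio assms(1-3) by (simp add: field_simps power2_eq_square)
  then have "sqrt (p / M) * sqrt (s / N) = q / B"
    using assms(2,5) by (simp add: real_sqrt_mult[symmetric])
  then have "sqrt (p / M) * B * sqrt (s / N) = q" "sqrt (s / N) * B * sqrt (p / M) = q"
    using assms(2) by (simp_all add: field_simps)
  moreover have "sqrt (u / c) * c * sqrt (u / c) = u" if "c > 0" "u > 0" for u c :: real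
  proof -
    have "sqrt (u / c) * c * sqrt (u / c) = (sqrt (u / c) * sqrt (u / c)) * c" by (simp only: mult_ac)
    also have "\<dots> = u" using that by simp
    finally show ?thesis .
  qed
  ultimately have "block_matrix k p q s i j = x i * block_matrix k M B N i j * x j" for i j
    unfolding x_def block_matrix_def using assms by simp
  moreover have "x i > 0" for i using assms unfolding x_def by simp
  ultimately show ?thesis
    unfolding diag_scaling_def restrict_matrix_def by (intro conjI exI[of _ x]) auto
qed

lemma sinkhorn_limit_block_matrix:
  assumes "M > 0" "B > 0" "N > 0" "p > 0" "q > 0" "s > 0"
    and "real k * p + real l * q = 1" "real k * q + real l * s = 1"
    and "p * s = M * N / B\<^sup>2 * q\<^sup>2"
  shows "sinkhorn_limit (k + l) (block_matrix k M B N) = restrict_matrix (k + l) (block_matrix k p q s)"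
  using assms
  by (intro sinkhorn_limit_eqI diag_scaling_block_matrix doubly_stochastic_block_matrix)
    (auto simp: block_matrix_def)

definition block_root :: "real \<Rightarrow> real \<Rightarrow> real \<Rightarrow> real" where
  "block_root K L t = K + L + sqrt (4 * K * L * t + (K - L)\<^sup>2)"

lemma
  fixes K L t :: real
  assumes "K > 0" "L > 0" "t > 0"
  shows block_root_gt: "2 * K < block_root K L t" "2 * L < block_root K L t"
    and block_root_product: "(block_root K L t - 2 * K) * (block_root K L t - 2 * L) = 4 * K * L * t"
proof -
  define r where "r = sqrt (4 * K * L * t + (K - L)\<^sup>2)"
  have r_sq: "r\<^sup>2 = 4 * K * L * t + (K - L)\<^sup>2"
    unfolding r_def using assms by (simp add: add_nonneg_nonneg)
  have "(K - L)\<^sup>2 < r\<^sup>2" using r_sq assms by simp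
  moreover have "r \<ge> 0" unfolding r_def using assms by simp
  ultimately have "\<bar>K - L\<bar> < r" using power2_less_imp_less[of "\<bar>K - L\<bar>" r] by simp
  then show "2 * K < block_root K L t" "2 * L < block_root K L t"
    unfolding block_root_def r_def[symmetric] by auto
  show "(block_root K L t - 2 * K) * (block_root K L t - 2 * L) = 4 * K * L * t"
    unfolding block_root_def r_def[symmetric] using r_sq by (simp add: power2_eq_square algebra_simps)
qed

lemma block_weight_closed_form:
  fixes K L t :: real
  assumes "K > 0" "L > 0" "t > 0" "t \<noteq> 1"
  defines "P \<equiv> block_root K L t"
  shows "1 / K + (K + L - sqrt (4 * K * L * t + (K - L)\<^sup>2)) / (2 * K\<^sup>2 * (t - 1))
           = (P - 2 * L) / (K * P)"
proof -
  define r where "r = sqrt (4 * K * L * t + (K - L)\<^sup>2)"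
  have P: "P = K + L + r" "P > 0" using block_root_gt[OF assms(1-3)] assms
    unfolding P_def block_root_def r_def by auto
  \<comment> \<open>P divides r^2 - (K + L)^2, which cancels the apparent singularity at t = 1\<close>
  have factored: "4 * K * L * (t - 1) = (r - (K + L)) * P"
    using block_root_product[OF assms(1-3)] unfolding P_def[symmetric] P(1)
    by (simp add: algebra_simps)
  have "2 * K\<^sup>2 * (t - 1) = K * (4 * K * L * (t - 1)) / (2 * L)"
    using assms(2) by (simp add: power2_eq_square)
  also have "\<dots> = K * (r - (K + L)) * P / (2 * L)" unfolding factored by simp
  finally have denominator: "2 * K\<^sup>2 * (t - 1) = K * (r - (K + L)) * P / (2 * L)" .
  define d where "d = r - (K + L)"
  have "d \<noteq> 0" using factored assms unfolding d_def by auto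
  moreover have numerator: "K + L - r = - d" unfolding d_def by simp
  ultimately have "(K + L - r) / (2 * K\<^sup>2 * (t - 1)) = - 2 * L / (K * P)"
    unfolding denominator numerator d_def[symmetric] using assms(1,2) P(2) by (simp add: field_simps)
  then show ?thesis unfolding r_def[symmetric] using assms(1) P(2) by (simp add: field_simps)
qed

lemma block_weights_pos_and_cross_ratio:
  fixes K L t :: real
  assumes "K > 0" "L > 0" "t > 0" "t \<noteq> 1"
  defines "a \<equiv> 1 / K + (K + L - sqrt (4 * K * L * t + (K - L)\<^sup>2)) / (2 * K\<^sup>2 * (t - 1))"
  defines "b \<equiv> (1 - K * a) / L"
  defines "c \<equiv> (1 - K * b) / L"
  shows "a > 0" "b > 0" "c > 0" "a * c = t * b\<^sup>2"
proof -
  define P where "P = block_root K L t"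
  have P_gt: "2 * K < P" "2 * L < P"
    using block_root_gt[OF assms(1-3)] unfolding P_def by auto
  have a: "a = (P - 2 * L) / (K * P)"
    using block_weight_closed_form[OF assms(1-4)] unfolding a_def P_def by simp
  have b: "b = 2 / P"
    unfolding b_def a using assms(1,2) P_gt by (simp add: field_simps)
  have c: "c = (P - 2 * K) / (L * P)"
    unfolding c_def b using assms(1,2) P_gt by (simp add: field_simps)
  show "a > 0" "b > 0" "c > 0"
    unfolding a b c using assms(1,2) P_gt by simp_all
  have "a * c = (P - 2 * K) * (P - 2 * L) / (K * L * P\<^sup>2)"
    unfolding a c by (simp add: power2_eq_square mult_ac)
  also have "\<dots> = t * b\<^sup>2"
    unfolding b block_root_product[OF assms(1-3), folded P_def]
    using assms(1,2) P_gt by (simp add: field_simps power2_eq_square)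
  finally show "a * c = t * b\<^sup>2" .
qed

theorem mainTheorem5:
  fixes k l n :: nat and M B N :: real
  assumes "k > 0" and "l > 0" and "k + l = n"
    and "M > 0" and "B > 0" and "N > 0"
  defines "A \<equiv> (\<lambda>i j. if i < k then (if j < k then M else B)
                         else (if j < k then B else N))"
  defines "t \<equiv> M * N / B\<^sup>2"
  defines "a \<equiv> (if t = 1 then 1 / real n
                else 1 / real k + (real n - sqrt (4 * real k * real l * t + (real k - real l)\<^sup>2))
                                 / (2 * (real k)\<^sup>2 * (t - 1)))"
  defines "b \<equiv> (if t = 1 then 1 / real n else (1 - real k * a) / real l)"
  defines "c \<equiv> (if t = 1 then 1 / real n else (1 - real k * b) / real l)"
  shows "(\<forall>i<n. \<forall>j<n. sinkhorn_limit n A i j =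
            (if i < k then (if j < k then a else b) else (if j < k then b else c)))
         \<and> (t \<noteq> 1 \<longrightarrow> c = (real l - real k + (real k)\<^sup>2 * a) / (real l)\<^sup>2)"
proof -
  have n: "real n = real k + real l" using \<open>k + l = n\<close> by simp
  have "t > 0" unfolding t_def using assms(4-6) by simp
  have "a > 0 \<and> b > 0 \<and> c > 0 \<and> real k * a + real l * b = 1 \<and> real k * b + real l * c = 1
        \<and> a * c = t * b\<^sup>2"
  proof (cases "t = 1")
    case True
    have "real k * (1 / real n) + real l * (1 / real n) = 1"
      using assms(1,3) by (simp add: field_simps)
    with True show ?thesis unfolding a_def b_def c_def using assms(1,3) by (simp add: power2_eq_square)
  next
    case False
    then show ?thesis
      using block_weights_pos_and_cross_ratio[of "real k" "real l" t] assms(1,2) \<open>t > 0\<close>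
      unfolding a_def b_def c_def n by simp
  qed
  then have "sinkhorn_limit n A = restrict_matrix n (block_matrix k a b c)"
    using sinkhorn_limit_block_matrix[of M B N a b c k l] assms(4-6)
    unfolding \<open>k + l = n\<close> t_def A_def block_matrix_def by simp
  moreover have "t \<noteq> 1 \<longrightarrow> c = (real l - real k + (real k)\<^sup>2 * a) / (real l)\<^sup>2"
    unfolding c_def b_def using assms(2) by (simp add: field_simps power2_eq_square)
  ultimately show ?thesis by (simp add: restrict_matrix_def block_matrix_def)
qed

end
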